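(* Let $k \geq 2$ be an integer, let $u_1, \dots, u_k \in \mathbb{R}$ be real numbers that are not all equal, and let $c_1, \dots, c_k \in \mathbb{R}$. Let $(a, b) \in \mathbb{R}^2$ be a solution of the optimization problem $$\min_{a, b \in \mathbb{R}} \sum_{i=1}^k (a u_i + b + c_i)^2 .$$ Then $$a \leq \zeta(\mathbf{u}) \max_{1 \leq i \leq k} |c_i| \qquad \text{and} \qquad b = -\frac{1}{k}\sum_{i=1}^k c_i - \frac{a}{k}\sum_{i=1}^k u_i,$$ where $\zeta(\mathbf{u}) = \dfrac{2\sum_{1 \leq i<j \leq k}|u_i-u_j|}{\sum_{1 \leq i<j \leq k}(u_i-u_j)^2}$.
   Context: $\mathbf{u} = (u_1, \dots, u_k)$ denotes the vector of the given constants $u_i$. *)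

theory Defs
  imports Complex_Main
begin

text \<open>Vectors u = (u_1,...,u_k), c = (c_1,...,c_k) are represented as functions nat => real,
  only the values at indices 1..k matter.\<close>

definition lsq_obj :: "nat \<Rightarrow> (nat \<Rightarrow> real) \<Rightarrow> (nat \<Rightarrow> real) \<Rightarrow> real \<Rightarrow> real \<Rightarrow> real" where
  "lsq_obj k u c a b = (\<Sum>i=1..k. (a * u i + b + c i)^2)"

definition zeta :: "nat \<Rightarrow> (nat \<Rightarrow> real) \<Rightarrow> real" where
  "zeta k u = (2 * (\<Sum>(i,j)\<in>{(i,j). 1 \<le> i \<and> i < j \<and> j \<le> k}. \<bar>u i - u j\<bar>))
              / (\<Sum>(i,j)\<in>{(i,j). 1 \<le> i \<and> i < j \<and> j \<le> k}. (u i - u j)^2)"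

end

theory Submission
  imports Defs
begin

(* The minimiser satisfies the normal equations: the residuals r i = a u i + b + c i sum to zero
  and are orthogonal to u. The first gives b. For the second, the Lagrange-type identity
  \<Sum>_{i<j} (u i - u j)(r i - r j) = k \<Sum> u i r i - \<Sum> u i \<Sum> r i turns orthogonality into
  a \<Sum>_{i<j} (u i - u j)^2 = - \<Sum>_{i<j} (u i - u j)(c i - c j), and |c i - c j| \<le> 2 max |c|
  bounds the right-hand side by 2 max |c| \<Sum>_{i<j} |u i - u j|. *)

lemma nonneg_quadratic_imp_linear_coeff_zero:
  fixes A B :: real
  assumes nonneg: "\<And>t. 0 \<le> t * B + t\<^sup>2 * A"
  shows "B = 0"
proof (rule ccontr)
  assume "B \<noteq> 0"
  define t where "t = - B / (\<bar>A\<bar> + 1)"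
  have "\<bar>A\<bar> + 1 > 0" by simp
  then have "t * B + t\<^sup>2 * A = B\<^sup>2 * (A - \<bar>A\<bar> - 1) / (\<bar>A\<bar> + 1)\<^sup>2"
    by (simp add: t_def divide_simps) (simp add: power2_eq_square algebra_simps)
  also have "\<dots> < 0"
    using \<open>B \<noteq> 0\<close> by (intro divide_neg_pos mult_pos_neg) auto
  finally show False
    using nonneg[of t] by simp
qed

lemma sum_squares_add_scaled:
  fixes r v :: "'a \<Rightarrow> real"
  shows "(\<Sum>i\<in>I. (r i + t * v i)\<^sup>2)
    = (\<Sum>i\<in>I. (r i)\<^sup>2) + t * (2 * (\<Sum>i\<in>I. v i * r i)) + t\<^sup>2 * (\<Sum>i\<in>I. (v i)\<^sup>2)"
  by (simp add: power2_eq_square algebra_simps sum.distrib sum_distrib_left)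

lemma sum_squares_minimal_imp_orthogonal:
  fixes r v :: "'a \<Rightarrow> real"
  assumes "\<And>t. (\<Sum>i\<in>I. (r i)\<^sup>2) \<le> (\<Sum>i\<in>I. (r i + t * v i)\<^sup>2)"
  shows "(\<Sum>i\<in>I. v i * r i) = 0"
proof -
  have "2 * (\<Sum>i\<in>I. v i * r i) = 0"
    by (rule nonneg_quadratic_imp_linear_coeff_zero[where A = "\<Sum>i\<in>I. (v i)\<^sup>2"])
      (use assms in \<open>simp add: sum_squares_add_scaled\<close>)
  then show ?thesis by simp
qed

lemma lsq_obj_normal_equations:
  assumes "\<forall>a' b'. lsq_obj k u c a b \<le> lsq_obj k u c a' b'"
  shows "(\<Sum>i=1..k. a * u i + b + c i) = 0"
    and "(\<Sum>i=1..k. u i * (a * u i + b + c i)) = 0"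
proof -
  have "(\<Sum>i=1..k. 1 * (a * u i + b + c i)) = 0"
  proof (rule sum_squares_minimal_imp_orthogonal)
    fix t
    show "(\<Sum>i=1..k. (a * u i + b + c i)\<^sup>2) \<le> (\<Sum>i=1..k. (a * u i + b + c i + t * 1)\<^sup>2)"
      using assms[rule_format, of a "b + t"] by (simp add: lsq_obj_def algebra_simps)
  qed
  then show "(\<Sum>i=1..k. a * u i + b + c i) = 0" by simp
  show "(\<Sum>i=1..k. u i * (a * u i + b + c i)) = 0"
  proof (rule sum_squares_minimal_imp_orthogonal)
    fix t
    show "(\<Sum>i=1..k. (a * u i + b + c i)\<^sup>2) \<le> (\<Sum>i=1..k. (a * u i + b + c i + t * u i)\<^sup>2)"
      using assms[rule_format, of "a + t" b] by (simp add: lsq_obj_def algebra_simps)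
  qed
qed

lemma sum_sum_symmetric_eq_twice_sum_less:
  fixes g :: "'a::linorder \<Rightarrow> 'a \<Rightarrow> real"
  assumes "finite I"
    and sym: "\<And>i j. g i j = g j i" and diag: "\<And>i. g i i = 0"
  shows "(\<Sum>i\<in>I. \<Sum>j\<in>I. g i j) = 2 * (\<Sum>(i,j)\<in>{(i,j). i \<in> I \<and> j \<in> I \<and> i < j}. g i j)"
proof -
  define h where "h i j = (if i < j then g i j else 0)" for i j
  have g_split: "g i j = h i j + h j i" for i j
    using sym[of i j] diag[of i] by (cases i j rule: linorder_cases) (auto simp: h_def)
  have "(\<Sum>i\<in>I. \<Sum>j\<in>I. g i j) = (\<Sum>i\<in>I. \<Sum>j\<in>I. h i j) + (\<Sum>i\<in>I. \<Sum>j\<in>I. h j i)"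
    by (simp add: g_split sum.distrib)
  also have "(\<Sum>i\<in>I. \<Sum>j\<in>I. h j i) = (\<Sum>i\<in>I. \<Sum>j\<in>I. h i j)"
    by (rule sum.swap)
  also have "(\<Sum>i\<in>I. \<Sum>j\<in>I. h i j) = (\<Sum>(i,j)\<in>I \<times> I. h i j)"
    by (simp add: sum.cartesian_product)
  also have "\<dots> = (\<Sum>(i,j)\<in>{(i,j). i \<in> I \<and> j \<in> I \<and> i < j}. g i j)"
    using \<open>finite I\<close>
    by (intro sum.mono_neutral_cong_right) (auto simp: h_def split: if_splits)
  finally show ?thesis by simp
qed

lemma sum_sum_diff_mult_diff:
  fixes u r :: "'a \<Rightarrow> real"
  shows "(\<Sum>i\<in>I. \<Sum>j\<in>I. (u i - u j) * (r i - r j))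
    = 2 * (real (card I) * (\<Sum>i\<in>I. u i * r i) - (\<Sum>i\<in>I. u i) * (\<Sum>i\<in>I. r i))"
proof -
  have "(\<Sum>i\<in>I. \<Sum>j\<in>I. (u i - u j) * (r i - r j))
      = (\<Sum>i\<in>I. \<Sum>j\<in>I. u i * r i) + (\<Sum>i\<in>I. \<Sum>j\<in>I. u j * r j)
        - (\<Sum>i\<in>I. \<Sum>j\<in>I. u i * r j) - (\<Sum>i\<in>I. \<Sum>j\<in>I. u j * r i)"
    by (simp add: algebra_simps sum.distrib sum_subtractf)
  also have "(\<Sum>i\<in>I. \<Sum>j\<in>I. u j * r i) = (\<Sum>i\<in>I. \<Sum>j\<in>I. u i * r j)"
    by (rule sum.swap)
  also have "(\<Sum>i\<in>I. \<Sum>j\<in>I. u i * r i) = real (card I) * (\<Sum>i\<in>I. u i * r i)"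
    by (simp add: sum_distrib_left)
  also have "(\<Sum>i\<in>I. \<Sum>j\<in>I. u j * r j) = real (card I) * (\<Sum>i\<in>I. u i * r i)"
    by simp
  also have "(\<Sum>i\<in>I. \<Sum>j\<in>I. u i * r j) = (\<Sum>i\<in>I. u i) * (\<Sum>i\<in>I. r i)"
    by (rule sum_product[symmetric])
  finally show ?thesis
    by simp
qed

lemma sum_less_pairs_diff_mult_diff:
  fixes u r :: "'a::linorder \<Rightarrow> real"
  assumes "finite I"
  shows "(\<Sum>(i,j)\<in>{(i,j). i \<in> I \<and> j \<in> I \<and> i < j}. (u i - u j) * (r i - r j))
    = real (card I) * (\<Sum>i\<in>I. u i * r i) - (\<Sum>i\<in>I. u i) * (\<Sum>i\<in>I. r i)"
  using sum_sum_symmetric_eq_twice_sum_less[OF assms, of "\<lambda>i j. (u i - u j) * (r i - r j)"]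
    sum_sum_diff_mult_diff[of u r I]
  by (simp add: algebra_simps)

lemma sum_less_pairs_diff_square_pos:
  fixes u :: "'a::linorder \<Rightarrow> real"
  assumes "finite I" "i \<in> I" "j \<in> I" "u i \<noteq> u j"
  shows "(\<Sum>(i,j)\<in>{(i,j). i \<in> I \<and> j \<in> I \<and> i < j}. (u i - u j)\<^sup>2) > 0"
proof -
  have "finite {(i,j). i \<in> I \<and> j \<in> I \<and> i < j}"
    by (rule finite_subset[of _ "I \<times> I"]) (use assms(1) in auto)
  moreover have "(min i j, max i j) \<in> {(i,j). i \<in> I \<and> j \<in> I \<and> i < j}"
    using assms by (cases i j rule: linorder_cases) auto
  moreover have "(u (min i j) - u (max i j))\<^sup>2 > 0"
    using assms(4) by (cases i j rule: linorder_cases) auto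
  ultimately show ?thesis
    by (intro sum_pos2[where i = "(min i j, max i j)"]) auto
qed

lemma neg_sum_diff_mult_diff_le:
  fixes u c :: "'a \<Rightarrow> real"
  assumes bounded: "\<And>i j. (i, j) \<in> P \<Longrightarrow> \<bar>c i\<bar> \<le> M \<and> \<bar>c j\<bar> \<le> M"
  shows "- (\<Sum>(i,j)\<in>P. (u i - u j) * (c i - c j)) \<le> 2 * M * (\<Sum>(i,j)\<in>P. \<bar>u i - u j\<bar>)"
proof -
  have "- ((u i - u j) * (c i - c j)) \<le> 2 * M * \<bar>u i - u j\<bar>" if "(i, j) \<in> P" for i j
  proof -
    have "\<bar>c i - c j\<bar> \<le> 2 * M"
      using bounded[OF that] by linarith
    then have "\<bar>u i - u j\<bar> * \<bar>c i - c j\<bar> \<le> \<bar>u i - u j\<bar> * (2 * M)"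
      by (intro mult_left_mono) auto
    then show ?thesis
      by (simp add: abs_mult[symmetric] mult.commute)
  qed
  then have "(\<Sum>(i,j)\<in>P. - ((u i - u j) * (c i - c j))) \<le> (\<Sum>(i,j)\<in>P. 2 * M * \<bar>u i - u j\<bar>)"
    by (intro sum_mono) auto
  then show ?thesis
    by (simp add: sum_negf sum_distrib_left case_prod_unfold)
qed

lemma lsq_obj_minimiser_intercept:
  assumes "k > 0" and "\<forall>a' b'. lsq_obj k u c a b \<le> lsq_obj k u c a' b'"
  shows "b = - (1 / real k) * (\<Sum>i=1..k. c i) - (a / real k) * (\<Sum>i=1..k. u i)"
proof -
  have "a * (\<Sum>i=1..k. u i) + real k * b + (\<Sum>i=1..k. c i) = 0"
    using lsq_obj_normal_equations(1)[OF assms(2)] by (simp add: sum.distrib sum_distrib_left)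
  with \<open>k > 0\<close> show ?thesis
    by (simp add: field_simps)
qed

lemma lsq_obj_minimiser_slope:
  assumes "\<forall>a' b'. lsq_obj k u c a b \<le> lsq_obj k u c a' b'"
  defines "P \<equiv> {(i,j). 1 \<le> i \<and> i < j \<and> j \<le> k}"
  shows "a * (\<Sum>(i,j)\<in>P. (u i - u j)\<^sup>2) = - (\<Sum>(i,j)\<in>P. (u i - u j) * (c i - c j))"
proof -
  define r where "r i = a * u i + b + c i" for i
  have "P = {(i,j). i \<in> {1..k} \<and> j \<in> {1..k} \<and> i < j}"
    by (auto simp: P_def)
  then have "0 = (\<Sum>(i,j)\<in>P. (u i - u j) * (r i - r j))"
    using sum_less_pairs_diff_mult_diff[of "{1..k}" u r] lsq_obj_normal_equations[OF assms(1)]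
    by (simp add: r_def)
  also have "\<dots> = a * (\<Sum>(i,j)\<in>P. (u i - u j)\<^sup>2) + (\<Sum>(i,j)\<in>P. (u i - u j) * (c i - c j))"
    by (simp add: r_def sum_distrib_left sum.distrib[symmetric] case_prod_unfold
        power2_eq_square algebra_simps)
  finally show ?thesis
    by linarith
qed

theorem propositionA1:
  fixes k :: nat and u c :: "nat \<Rightarrow> real" and a b :: real
  assumes "k \<ge> 2"
    and "\<exists>i\<in>{1..k}. \<exists>j\<in>{1..k}. u i \<noteq> u j"
    and "\<forall>a' b'. lsq_obj k u c a b \<le> lsq_obj k u c a' b'"
  shows "a \<le> zeta k u * (MAX i\<in>{1..k}. \<bar>c i\<bar>)
    \<and> b = - (1 / real k) * (\<Sum>i=1..k. c i) - (a / real k) * (\<Sum>i=1..k. u i)"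
proof -
  define P where "P = {(i,j). 1 \<le> i \<and> i < j \<and> (j::nat) \<le> k}"
  define M where "M = (MAX i\<in>{1..k}. \<bar>c i\<bar>)"
  have "P = {(i,j). i \<in> {1..k} \<and> j \<in> {1..k} \<and> i < j}"
    by (auto simp: P_def)
  then have S2_pos: "(\<Sum>(i,j)\<in>P. (u i - u j)\<^sup>2) > 0"
    using assms(2) sum_less_pairs_diff_square_pos[of "{1..k}"] by auto
  have "a * (\<Sum>(i,j)\<in>P. (u i - u j)\<^sup>2) = - (\<Sum>(i,j)\<in>P. (u i - u j) * (c i - c j))"
    unfolding P_def by (rule lsq_obj_minimiser_slope[OF assms(3)])
  also have "\<dots> \<le> 2 * M * (\<Sum>(i,j)\<in>P. \<bar>u i - u j\<bar>)"
    by (rule neg_sum_diff_mult_diff_le) (auto simp: P_def M_def)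
  finally have "a \<le> zeta k u * M"
    using S2_pos by (simp add: zeta_def P_def pos_le_divide_eq mult_ac)
  moreover have "b = - (1 / real k) * (\<Sum>i=1..k. c i) - (a / real k) * (\<Sum>i=1..k. u i)"
    using assms(1,3) by (intro lsq_obj_minimiser_intercept) auto
  ultimately show ?thesis
    by (simp add: M_def)
qed

end
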